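(* Let $c,M\in\mathbb{N}$ with $c,M\ge1$, and let $B_{c,M}=(n_B)_{n\ge0}$ be the periodic sequence defined by $n_B=c$ if $n\ge1$ and $M\mid n$, and $n_B=1$ otherwise (in particular $0_B=1$). Then $B_{c,M}$ is a cobweb tiling sequence.
   Context: Notation: $n_F\equiv F_n$. A sequence $F=(n_F)_{n\ge0}$ of natural numbers with $0_F=1$ is cobweb-admissible iff every $F$-nomial coefficient $\binom{n}{k}_F=\frac{n_F(n-1)_F\cdots(n-k+1)_F}{1_F2_F\cdots k_F}$, $0\le k\le n$, is a nonnegative integer. The cobweb poset of $F$ has, for each $s\ge1$, a level $\Phi_s$ consisting of $s_F$ distinct vertices (levels pairwise disjoint), plus a root level $\Phi_0$ with one vertex; for $x\in\Phi_i$, $y\in\Phi_j$ one has $x<y$ iff $i<j$. For $1\le a\le b$, the layer $\langle\Phi_a\to\Phi_b\rangle$ is the subposet on $\Phi_a\cup\dots\cup\Phi_b$; it has $m=b-a+1$ levels and its maximal chains form the set $\Phi_a\times\dots\times\Phi_b$. For a permutation $\sigma$ of $\{1,\dots,m\}$, a block of type $\sigma P_m$ in this layer is the subposet induced on $V_a\cup\dots\cup V_b$ where $V_{a-1+i}\subseteq\Phi_{a-1+i}$ and $|V_{a-1+i}|=\sigma(i)_F$ for $i=1,\dots,m$; its maximal chains form the set $V_a\times\dots\times V_b$. A tiling of the layer is a finite family of such blocks ($\sigma$ may vary from block to block) whose sets $V_a\times\dots\times V_b$ partition $\Phi_a\times\dots\times\Phi_b$ (pairwise max-disjoint and covering all maximal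 chains). A cobweb tiling sequence is a cobweb-admissible sequence $F$ such that for all $1\le a\le b$ the layer $\langle\Phi_a\to\Phi_b\rangle$ admits a tiling by blocks of type $\sigma P_{b-a+1}$. *)

theory Defs
  imports "HOL-Library.FuncSet"
begin

definition fnom_num :: "(nat \<Rightarrow> nat) \<Rightarrow> nat \<Rightarrow> nat \<Rightarrow> nat" where
  "fnom_num F n k = (\<Prod>i<k. F (n - i))"

definition fnom_den :: "(nat \<Rightarrow> nat) \<Rightarrow> nat \<Rightarrow> nat" where
  "fnom_den F k = (\<Prod>i\<in>{1..k}. F i)"

definition cobweb_admissible :: "(nat \<Rightarrow> nat) \<Rightarrow> bool" where
  "cobweb_admissible F \<longleftrightarrow> F 0 = 1 \<and>
     (\<forall>n k. k \<le> n \<longrightarrow> fnom_den F k \<noteq> 0 \<and> fnom_den F k dvd fnom_num F n k)"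

text \<open>Level s of the cobweb poset is represented by the vertex labels {..<F s}
  (vertex (s,j)). A maximal chain of the layer from level a to level b is a choice
  of one vertex in each level a..b, i.e. an element of the extensional product.\<close>
definition layer_chains :: "(nat \<Rightarrow> nat) \<Rightarrow> nat \<Rightarrow> nat \<Rightarrow> (nat \<Rightarrow> nat) set" where
  "layer_chains F a b = PiE {a..b} (\<lambda>s. {..<F s})"

definition is_block :: "(nat \<Rightarrow> nat) \<Rightarrow> nat \<Rightarrow> nat \<Rightarrow> (nat \<Rightarrow> nat) \<Rightarrow> (nat \<Rightarrow> nat set) \<Rightarrow> bool" where
  "is_block F a b \<sigma> V \<longleftrightarrow>
     bij_betw \<sigma> {1..b - a + 1} {1..b - a + 1} \<and>
     (\<forall>i\<in>{1..b - a + 1}. V (a - 1 + i) \<subseteq> {..<F (a - 1 + i)} \<and>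
                           finite (V (a - 1 + i)) \<and>
                           card (V (a - 1 + i)) = F (\<sigma> i))"

definition block_chains :: "nat \<Rightarrow> nat \<Rightarrow> (nat \<Rightarrow> nat set) \<Rightarrow> (nat \<Rightarrow> nat) set" where
  "block_chains a b V = PiE {a..b} V"

definition layer_tiling :: "(nat \<Rightarrow> nat) \<Rightarrow> nat \<Rightarrow> nat \<Rightarrow> (nat \<Rightarrow> nat set) set \<Rightarrow> bool" where
  "layer_tiling F a b T \<longleftrightarrow> finite T \<and>
     (\<forall>V\<in>T. \<exists>\<sigma>. is_block F a b \<sigma> V) \<and>
     (\<forall>V\<in>T. \<forall>W\<in>T. V \<noteq> W \<longrightarrow> block_chains a b V \<inter> block_chains a b W = {}) \<and>
     (\<Union>V\<in>T. block_chains a b V) = layer_chains F a b"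

definition cobweb_tiling_sequence :: "(nat \<Rightarrow> nat) \<Rightarrow> bool" where
  "cobweb_tiling_sequence F \<longleftrightarrow> cobweb_admissible F \<and>
     (\<forall>a b. 1 \<le> a \<and> a \<le> b \<longrightarrow> (\<exists>T. layer_tiling F a b T))"

definition Bseq :: "nat \<Rightarrow> nat \<Rightarrow> nat \<Rightarrow> nat" where
  "Bseq c M n = (if n \<ge> 1 \<and> M dvd n then c else 1)"

end

theory Submission
  imports Defs
begin

(* Both halves of the claim reduce to
   one counting fact: a window {d+1, ..., d+m} of m consecutive positive integers
   contains at least floor(m/M) multiples of M, while the initial window {1..m}
   contains at most that many.

   Admissibility: the F-nomial denominator is c^(#multiples in {1..k}) and the
   numerator is c^(#multiples in {n-k+1..n}), so the former divides the latter.

   Tiling: for a layer with levels a..b we pick a permutation sigma of {1..m}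
   sending as many c-levels of the layer as there are multiples in {1..m} onto
   those multiples; the surplus c-levels R are "frozen".  The blocks obtained by
   fixing one vertex on every frozen level and keeping all vertices elsewhere
   have type sigma P_m, and each maximal chain lies in exactly one of them, namely
   the block determined by its restriction to R. *)

lemma multiples_in_initial_segment:
  fixes M m :: nat
  assumes "M \<ge> 1"
  shows "card {i\<in>{1..m}. M dvd i} \<le> m div M"
proof -
  have "{i\<in>{1..m}. M dvd i} \<subseteq> (\<lambda>j. M * j) ` {1..m div M}"
  proof
    fix i assume "i \<in> {i\<in>{1..m}. M dvd i}"
    then obtain j where i: "i = M * j" "1 \<le> i" "i \<le> m" by auto
    then have "1 \<le> j" "j \<le> m div M"
      using assms by (auto simp: less_eq_div_iff_mult_less_eq mult.commute intro: Suc_leI)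
    with i show "i \<in> (\<lambda>j. M * j) ` {1..m div M}" by auto
  qed
  then have "card {i\<in>{1..m}. M dvd i} \<le> card ((\<lambda>j. M * j) ` {1..m div M})"
    by (intro card_mono) auto
  also have "\<dots> \<le> m div M" using card_image_le[of "{1..m div M}"] by simp
  finally show ?thesis .
qed

(* Any window {d+1..d+m} contains at least floor(m/M) multiples of M: the j-th
   block of M consecutive indices contains the index j*M + r with d + j*M + r a
   multiple of M, where r = M - (d mod M). *)
lemma multiples_in_window:
  fixes M m d :: nat
  assumes "M \<ge> 1"
  shows "m div M \<le> card {i\<in>{1..m}. M dvd (d + i)}"
proof -
  define r where "r = M - d mod M"
  have "d mod M < M" "M * (d div M) + d mod M = d"
    using assms by (simp_all add: mult.commute)
  then have r: "1 \<le> r" "r \<le> M" "d + r = M * (d div M) + M"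
    unfolding r_def by linarith+
  have "inj_on (\<lambda>j. j * M + r) {..<m div M}"
    using assms by (auto simp: inj_on_def)
  moreover have "(\<lambda>j. j * M + r) ` {..<m div M} \<subseteq> {i\<in>{1..m}. M dvd (d + i)}"
  proof (rule image_subsetI)
    fix j assume "j \<in> {..<m div M}"
    then have "Suc j * M \<le> m div M * M" by (intro mult_le_mono1) simp
    also have "\<dots> \<le> m" by simp
    finally have "j * M + M \<le> m" by simp
    moreover have "d + (j * M + r) = M * (d div M + 1 + j)"
      using r(3) by (simp add: algebra_simps)
    ultimately show "j * M + r \<in> {i\<in>{1..m}. M dvd (d + i)}"
      using r(1,2) by auto
  qed
  ultimately show ?thesis
    using card_inj_on_le[of "\<lambda>j. j * M + r" "{..<m div M}"] by simp
qed

lemma initial_segment_has_fewest_multiples: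
  fixes M m d :: nat
  assumes "M \<ge> 1"
  shows "card {i\<in>{1..m}. M dvd i} \<le> card {i\<in>{1..m}. M dvd (d + i)}"
  using multiples_in_initial_segment[OF assms] multiples_in_window[OF assms] by (rule le_trans)

lemma prod_Bseq:
  assumes "finite A"
  shows "(\<Prod>x\<in>A. Bseq c M (h x)) = c ^ card {x\<in>A. 1 \<le> h x \<and> M dvd h x}"
proof -
  have "(\<Prod>x\<in>A. Bseq c M (h x)) = (\<Prod>x\<in>{x\<in>A. 1 \<le> h x \<and> M dvd h x}. c)"
    unfolding Bseq_def using assms by (simp add: prod.If_cases Int_def)
  then show ?thesis by simp
qed

lemma fnom_num_as_window:
  assumes "k \<le> n"
  shows "fnom_num F n k = (\<Prod>j\<in>{1..k}. F (n - k + j))"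
  unfolding fnom_num_def
  by (rule prod.reindex_bij_witness[of _ "\<lambda>j. k - j" "\<lambda>i. k - i"]) (use assms in auto)

(* B_{c,M} is cobweb-admissible: denominator c^p divides numerator c^q, p <= q. *)
lemma Bseq_admissible:
  fixes c M :: nat
  assumes "c \<ge> 1" and "M \<ge> 1"
  shows "cobweb_admissible (Bseq c M)"
  unfolding cobweb_admissible_def
proof (intro conjI allI impI)
  show "Bseq c M 0 = 1" by (simp add: Bseq_def)
  fix n k :: nat assume "k \<le> n"
  have den: "fnom_den (Bseq c M) k = c ^ card {i\<in>{1..k}. M dvd i}"
    unfolding fnom_den_def prod_Bseq[OF finite_atLeastAtMost]
    by (rule arg_cong[where f = "\<lambda>A. c ^ card A"]) auto
  have num: "fnom_num (Bseq c M) n k = c ^ card {i\<in>{1..k}. M dvd (n - k + i)}"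
    unfolding fnom_num_as_window[OF \<open>k \<le> n\<close>] prod_Bseq[OF finite_atLeastAtMost]
    by (rule arg_cong[where f = "\<lambda>A. c ^ card A"]) auto
  show "fnom_den (Bseq c M) k \<noteq> 0"
    unfolding den using assms(1) by simp
  show "fnom_den (Bseq c M) k dvd fnom_num (Bseq c M) n k"
    unfolding den num using initial_segment_has_fewest_multiples[OF assms(2)] by (rule le_imp_power_dvd)
qed

definition frozen_block :: "(nat \<Rightarrow> nat) \<Rightarrow> nat set \<Rightarrow> (nat \<Rightarrow> nat) \<Rightarrow> nat \<Rightarrow> nat set" where
  "frozen_block F R g s = (if s \<in> R then {g s} else {..<F s})"

lemma block_chains_frozen_block:
  assumes "R \<subseteq> {a..b}" and "g \<in> PiE R (\<lambda>s. {..<F s})"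
  shows "block_chains a b (frozen_block F R g) = {x \<in> layer_chains F a b. restrict x R = g}"
proof (intro set_eqI iffI)
  fix x assume x: "x \<in> block_chains a b (frozen_block F R g)"
  have level: "x s \<in> frozen_block F R g s" if "s \<in> {a..b}" for s
    using x that by (auto simp: block_chains_def)
  have "restrict x R = g"
  proof (rule extensionalityI[of _ R])
    show "g \<in> extensional R" using assms(2) by (simp add: PiE_iff)
    show "restrict x R s = g s" if "s \<in> R" for s
      using level[of s] that assms(1) by (auto simp: frozen_block_def)
  qed simp
  moreover have "x \<in> layer_chains F a b"
    using x level assms(2) unfolding layer_chains_def block_chains_def frozen_block_def
    by (fastforce simp: PiE_iff split: if_splits)
  ultimately show "x \<in> {x \<in> layer_chains F a b. restrict x R = g}" by simp
next
  fix x assume "x \<in> {x \<in> layer_chains F a b. restrict x R = g}"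
  then show "x \<in> block_chains a b (frozen_block F R g)"
    using assms unfolding block_chains_def layer_chains_def frozen_block_def
    by (auto simp: PiE_iff)
qed

lemma frozen_block_is_block:
  assumes "1 \<le> a" and "R \<subseteq> {a..b}" and "g \<in> PiE R (\<lambda>s. {..<F s})"
    and "bij_betw \<sigma> {1..b - a + 1} {1..b - a + 1}"
    and "\<And>i. i \<in> {1..b - a + 1} \<Longrightarrow> F (\<sigma> i) = (if a - 1 + i \<in> R then 1 else F (a - 1 + i))"
  shows "is_block F a b \<sigma> (frozen_block F R g)"
  unfolding is_block_def
proof (intro conjI ballI assms(4))
  fix i assume i: "i \<in> {1..b - a + 1}"
  show "frozen_block F R g (a - 1 + i) \<subseteq> {..<F (a - 1 + i)}"
    using assms(3) by (auto simp: frozen_block_def PiE_iff)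
  show "finite (frozen_block F R g (a - 1 + i))"
    by (simp add: frozen_block_def)
  show "card (frozen_block F R g (a - 1 + i)) = F (\<sigma> i)"
    using assms(5)[OF i] by (simp add: frozen_block_def)
qed

lemma frozen_blocks_tiling:
  assumes "1 \<le> a" and "R \<subseteq> {a..b}"
    and "bij_betw \<sigma> {1..b - a + 1} {1..b - a + 1}"
    and "\<And>i. i \<in> {1..b - a + 1} \<Longrightarrow> F (\<sigma> i) = (if a - 1 + i \<in> R then 1 else F (a - 1 + i))"
  shows "layer_tiling F a b (frozen_block F R ` PiE R (\<lambda>s. {..<F s}))"
  unfolding layer_tiling_def
proof (intro conjI ballI impI)
  have "finite R" using assms(2) finite_subset by blast
  then show "finite (frozen_block F R ` PiE R (\<lambda>s. {..<F s}))"
    by (simp add: finite_PiE)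
next
  fix V assume "V \<in> frozen_block F R ` PiE R (\<lambda>s. {..<F s})"
  then show "\<exists>\<sigma>. is_block F a b \<sigma> V"
    using frozen_block_is_block[OF assms(1,2) _ assms(3,4)] by blast
next
  fix V W assume "V \<in> frozen_block F R ` PiE R (\<lambda>s. {..<F s})"
    and "W \<in> frozen_block F R ` PiE R (\<lambda>s. {..<F s})" and "V \<noteq> W"
  then show "block_chains a b V \<inter> block_chains a b W = {}"
    using block_chains_frozen_block[OF assms(2)] by force
next
  show "(\<Union>V\<in>frozen_block F R ` PiE R (\<lambda>s. {..<F s}). block_chains a b V) = layer_chains F a b"
  proof (intro equalityI subsetI)
    fix x assume "x \<in> (\<Union>V\<in>frozen_block F R ` PiE R (\<lambda>s. {..<F s}). block_chains a b V)"
    then show "x \<in> layer_chains F a b"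
      using block_chains_frozen_block[OF assms(2)] by auto
  next
    fix x assume x: "x \<in> layer_chains F a b"
    then have "restrict x R \<in> PiE R (\<lambda>s. {..<F s})"
      using assms(2) by (auto simp: layer_chains_def PiE_iff)
    with x show "x \<in> (\<Union>V\<in>frozen_block F R ` PiE R (\<lambda>s. {..<F s}). block_chains a b V)"
      using block_chains_frozen_block[OF assms(2)] by blast
  qed
qed

lemma permutation_moving_subset:
  assumes "finite U" and "A \<subseteq> U" and "B \<subseteq> U" and "card A = card B"
  obtains \<sigma> where "bij_betw \<sigma> U U" and "\<And>i. i \<in> U \<Longrightarrow> \<sigma> i \<in> B \<longleftrightarrow> i \<in> A"
proof -
  have fin: "finite A" "finite B" using assms finite_subset by blast+
  obtain f where f: "bij_betw f A B"
    using finite_same_card_bij[OF fin assms(4)] by blast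
  have "card (U - A) = card (U - B)"
    using assms fin by (simp add: card_Diff_subset)
  then obtain g where g: "bij_betw g (U - A) (U - B)"
    using finite_same_card_bij assms(1) by blast
  define \<sigma> where "\<sigma> i = (if i \<in> A then f i else g i)" for i
  have "bij_betw \<sigma> (A \<union> (U - A)) (B \<union> (U - B))"
    unfolding \<sigma>_def by (rule bij_betw_disjoint_Un[OF f g]) auto
  moreover have "A \<union> (U - A) = U" "B \<union> (U - B) = U" using assms(2,3) by auto
  ultimately have "bij_betw \<sigma> U U" by simp
  moreover have "\<sigma> i \<in> B \<longleftrightarrow> i \<in> A" if "i \<in> U" for i
    using that bij_betwE[OF f] bij_betwE[OF g] unfolding \<sigma>_def by (cases "i \<in> A") auto
  ultimately show ?thesis using that by blast
qed

(* W indexes the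
   c-levels of the layer, Q the multiples of M in {1..m}; a subset P of W with
   |P| = |Q| is matched with Q by sigma, and the remaining c-levels are frozen. *)
lemma Bseq_layer_tiling:
  fixes c M a b :: nat
  assumes "M \<ge> 1" and "1 \<le> a" and "a \<le> b"
  shows "\<exists>T. layer_tiling (Bseq c M) a b T"
proof -
  define m where "m = b - a + 1"
  define Q where "Q = {i\<in>{1..m}. M dvd i}"
  define W where "W = {i\<in>{1..m}. M dvd (a - 1 + i)}"
  have "card Q \<le> card W"
    unfolding Q_def W_def by (rule initial_segment_has_fewest_multiples[OF assms(1)])
  then obtain P where P: "P \<subseteq> W" "card P = card Q"
    by (rule obtain_subset_with_card_n)
  have "P \<subseteq> {1..m}" "Q \<subseteq> {1..m}"
    using P(1) unfolding Q_def W_def by auto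
  then obtain \<sigma> where \<sigma>: "bij_betw \<sigma> {1..m} {1..m}" "\<And>i. i \<in> {1..m} \<Longrightarrow> \<sigma> i \<in> Q \<longleftrightarrow> i \<in> P"
    using permutation_moving_subset[OF finite_atLeastAtMost _ _ P(2)] by blast
  define R where "R = (\<lambda>i. a - 1 + i) ` (W - P)"
  have "R \<subseteq> {a..b}"
    using assms unfolding R_def W_def m_def by auto
  moreover have "Bseq c M (\<sigma> i) = (if a - 1 + i \<in> R then 1 else Bseq c M (a - 1 + i))"
    if i: "i \<in> {1..m}" for i
  proof -
    have "\<sigma> i \<in> {1..m}" using bij_betwE[OF \<sigma>(1)] i by blast
    then have "Bseq c M (\<sigma> i) = (if i \<in> P then c else 1)"
      using \<sigma>(2)[OF i] unfolding Bseq_def Q_def by auto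
    moreover have "a - 1 + i \<in> R \<longleftrightarrow> i \<in> W - P"
      unfolding R_def by auto
    moreover have "Bseq c M (a - 1 + i) = (if i \<in> W then c else 1)"
      using i unfolding Bseq_def W_def by auto
    ultimately show ?thesis using P(1) by auto
  qed
  ultimately have "layer_tiling (Bseq c M) a b (frozen_block (Bseq c M) R ` PiE R (\<lambda>s. {..<Bseq c M s}))"
    using frozen_blocks_tiling[OF assms(2) _ \<sigma>(1)[unfolded m_def]] unfolding m_def by blast
  then show ?thesis by blast
qed

theorem mainTheorem10:
  fixes c M :: nat
  assumes "c \<ge> 1" and "M \<ge> 1"
  shows "cobweb_tiling_sequence (Bseq c M)"
  unfolding cobweb_tiling_sequence_def
  using Bseq_admissible[OF assms] Bseq_layer_tiling[OF assms(2)] by blast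

end
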